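(* Let $n \ge s \ge 4$ be integers, let $p$ be an odd prime and let $0 \le j < p$ be an integer. Let \[ F_p(x) = \sum_{k=0}^{s-1} \binom{n}{k+1} G_{k+1}\, p^k\, x^{s-1-k}. \] Then \[ |F_p(j)| \le 3\,(np/\pi)^{s+1}. \]
   Context: The Bernoulli numbers $B_k$ are defined by $\frac{t}{e^t-1} = \sum_{k\ge 0} \frac{B_k}{k!} t^k$, and the Genocchi numbers by $G_k = 2(1-2^k)B_k$. Here $0^0 = 1$. *)

theory Defs
  imports "HOL-Analysis.Analysis" "HOL-Computational_Algebra.Formal_Power_Series"
begin

definition bernoulli :: "nat \<Rightarrow> real" where
  "bernoulli k = fact k * fps_nth (fps_X / (fps_exp 1 - 1)) k"

definition genocchi :: "nat \<Rightarrow> real" where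
  "genocchi k = 2 * (1 - 2 ^ k) * bernoulli k"

definition F_poly :: "nat \<Rightarrow> nat \<Rightarrow> nat \<Rightarrow> real \<Rightarrow> real" where
  "F_poly n s p x = (\<Sum>k = 0..s-1. real (n choose (k+1)) * genocchi (k+1) * real p ^ k * x ^ (s-1-k))"


end

theory Submission
  imports Defs
begin

(*
  Since 0 \<le> j < p,
  everything reduces to the bound |G_k| \<le> 6 (k+1)! / pi^k, after which
  |F_p(j)| \<le> 6 p^{s-1} pi^{-(s+1)} T(n,s)  with  T(n,s) = \<Sum>_{k<s} C(n,k+1) (k+2)! pi^{s-k},
  and an induction on s shows T(n,s) \<le> 9/2 n^{s+1}; as p \<ge> 3 this gives the claim.

  The Genocchi bound rests on |B_{2m}|/(2m)! \<le> 3 (2m+1) / (2 pi)^{2m}, proved without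
  complex analysis.  The numbers c_m = |B_{2m}|/(2m)! are the Taylor coefficients of
  H(x) = 1 - (x/2) cot(x/2).  From the generating function of the Bernoulli numbers we
  derive the recurrence (2m+1) c_m = [m = 1]/4 + \<Sum>_{0<j<m} c_j c_{m-j}, hence c_m > 0.
  H satisfies the Riccati equation x H' = H^2 - H + x^2/4, while the recurrence makes
  every partial sum P_M a strict subsolution; a comparison argument then gives P_M < H
  on [1, 2 pi).  Evaluating at x = 2 pi (1 - 1/(2M+1)) bounds c_M.
*)

section \<open>The exponential generating function of the Bernoulli numbers\<close>

definition bernoulli_egf :: "real fps" where
  "bernoulli_egf = fps_X / (fps_exp 1 - 1)"

abbreviation bern_coeff :: "nat \<Rightarrow> real" where
  "bern_coeff k \<equiv> fps_nth bernoulli_egf k"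

lemma bernoulli_eq_coeff: "bernoulli k = fact k * bern_coeff k"
  by (simp add: bernoulli_def bernoulli_egf_def)

(* Since e^X - 1 has subdegree 1, the quotient defining the series is exact. *)
lemma bernoulli_egf_mult: "bernoulli_egf * (fps_exp 1 - 1) = fps_X"
proof -
  have nz: "(fps_exp 1 - 1 :: real fps) \<noteq> 0"
  proof
    assume "(fps_exp 1 - 1 :: real fps) = 0"
    hence "fps_nth (fps_exp 1 - 1 :: real fps) 1 = 0" by simp
    thus False by simp
  qed
  have "subdegree (fps_exp 1 - 1 :: real fps) = 1"
    by (rule subdegreeI) auto
  with nz show ?thesis
    unfolding bernoulli_egf_def by (intro fps_times_divide_eq) auto
qed

lemma bern_coeff_0: "bern_coeff 0 = 1"
proof -
  have "fps_nth (bernoulli_egf * (fps_exp 1 - 1)) 1 = 1" by (simp add: bernoulli_egf_mult)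
  thus ?thesis by (simp add: fps_mult_nth_1)
qed

(* Differentiating  B (e - 1) = X  and eliminating e gives the Riccati equation
   X B' = B - X B - B^2, the source of the quadratic recurrence below. *)
lemma bernoulli_egf_ode:
  "fps_X * fps_deriv bernoulli_egf = bernoulli_egf - fps_X * bernoulli_egf - bernoulli_egf ^ 2"
proof -
  define B where "B = bernoulli_egf"
  define e where "e = (fps_exp 1 - 1 :: real fps)"
  have m: "B * e = fps_X" using bernoulli_egf_mult by (simp add: B_def e_def)
  hence "fps_deriv (B * e) = 1" by simp
  hence D: "fps_deriv B * e + B * (e + 1) = 1" by (simp add: e_def algebra_simps)
  have "(fps_X * fps_deriv B) * e = fps_X * (1 - B * (e + 1))"
    using D by (metis add_diff_cancel_right' mult.assoc)
  also have "\<dots> = (B - fps_X * B - B ^ 2) * e"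
    using m by (simp add: algebra_simps power2_eq_square)
  finally have "(fps_X * fps_deriv B) * e = (B - fps_X * B - B ^ 2) * e" .
  moreover have "e \<noteq> 0" using m by auto
  ultimately show ?thesis unfolding B_def by simp
qed

lemma bern_coeff_rec:
  assumes "k \<ge> 1"
  shows "real k * bern_coeff k
           = bern_coeff k - bern_coeff (k - 1) - (\<Sum>i=0..k. bern_coeff i * bern_coeff (k - i))"
proof -
  have "fps_nth (fps_X * fps_deriv bernoulli_egf) k
          = fps_nth (bernoulli_egf - fps_X * bernoulli_egf - bernoulli_egf ^ 2) k"
    using bernoulli_egf_ode by simp
  moreover have "fps_nth (bernoulli_egf ^ 2) k = (\<Sum>i=0..k. bern_coeff i * bern_coeff (k - i))"
    by (simp add: power2_eq_square fps_mult_nth)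
  ultimately show ?thesis using assms by (simp del: fps_mult_nth)
qed

lemma bern_coeff_1: "bern_coeff 1 = -1/2"
  using bern_coeff_rec[of 1] bern_coeff_0 by simp

lemma bernoulli_egf_reflect: "fps_compose bernoulli_egf (-fps_X) = bernoulli_egf + fps_X"
proof -
  define B where "B = bernoulli_egf"
  define E where "E = (fps_exp 1 :: real fps)"
  define E' where "E' = (fps_exp (-1) :: real fps)"
  have EE: "E' * E = 1" unfolding E_def E'_def
    by (metis add.commute add.right_inverse fps_exp_0 fps_exp_add_mult)
  have BE: "B * (E - 1) = fps_X" using bernoulli_egf_mult by (simp add: B_def E_def)
  have cE: "fps_compose (E - 1) (-fps_X) = E' - 1"
    by (simp add: fps_compose_uminus' E_def E'_def fps_eq_iff power_minus' field_simps)
  have "fps_compose (B * (E - 1)) (-fps_X) = fps_compose fps_X (-fps_X)"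
    by (simp add: BE)
  hence 1: "fps_compose B (-fps_X) * (E' - 1) = - fps_X"
    by (simp add: fps_compose_mult_distrib cE[symmetric])
  have "(B + fps_X) * (E' - 1) * E = (B + fps_X) * (1 - E)"
    using EE by (simp add: mult.assoc left_diff_distrib)
  also have "\<dots> = - fps_X * E" using BE by (simp add: algebra_simps)
  finally have "(B + fps_X) * (E' - 1) * E = - fps_X * E" .
  moreover have "E \<noteq> 0" using EE by auto
  ultimately have 2: "(B + fps_X) * (E' - 1) = - fps_X"
    by (metis mult_right_cancel mult_minus_left)
  have "fps_nth (E' - 1) 1 \<noteq> 0" by (simp add: E'_def)
  hence "E' - 1 \<noteq> 0" by auto
  with 1 2 show ?thesis unfolding B_def by (metis mult_right_cancel)
qed

lemma bern_coeff_odd: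
  assumes "odd k" "k \<noteq> 1"
  shows "bern_coeff k = 0"
proof -
  have "fps_nth (fps_compose bernoulli_egf (-fps_X)) k = fps_nth (bernoulli_egf + fps_X) k"
    using bernoulli_egf_reflect by simp
  hence "(-1) ^ k * bern_coeff k = bern_coeff k" using assms by (simp add: fps_compose_uminus')
  thus ?thesis using assms by simp
qed

section \<open>The coefficients of  1 - (x/2) cot(x/2)\<close>

lemma sum_split_even_odd:
  fixes f :: "nat \<Rightarrow> 'a::comm_monoid_add"
  shows "sum f {0..2*m} = (\<Sum>j=0..m. f (2*j)) + (\<Sum>j<m. f (2*j+1))"
proof (induction m)
  case (Suc m)
  have "{0..2*Suc m} = insert (2*m+2) (insert (2*m+1) {0..2*m})" by auto
  hence "sum f {0..2*Suc m} = f (2*m+2) + (f (2*m+1) + sum f {0..2*m})" by simp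
  with Suc show ?case by (simp add: ac_simps)
qed simp

(* Restricting the quadratic recurrence to even indices; the odd coefficients only
   contribute through B_1 = -1/2, i.e. at m = 1. *)
lemma bern_coeff_even_rec:
  assumes m: "m \<ge> 1"
  shows "real (2*m+1) * bern_coeff (2*m)
           = (if m = 1 then 1/4 else 0) - (\<Sum>j=1..m-1. bern_coeff (2*j) * bern_coeff (2*(m-j)))"
proof -
  let ?b = bern_coeff
  have rec: "real (2*m) * ?b (2*m) = ?b (2*m) - ?b (2*m - 1) - (\<Sum>i=0..2*m. ?b i * ?b (2*m - i))"
    using bern_coeff_rec[of "2*m"] m by simp
  have split: "(\<Sum>i=0..2*m. ?b i * ?b (2*m - i))
      = (\<Sum>j=0..m. ?b (2*j) * ?b (2*m - 2*j)) + (\<Sum>j<m. ?b (2*j+1) * ?b (2*m - (2*j+1)))"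
    by (rule sum_split_even_odd)
  have "{0..m} = insert 0 (insert m {1..m-1})" using m by auto
  hence even: "(\<Sum>j=0..m. ?b (2*j) * ?b (2*m - 2*j))
      = 2 * ?b (2*m) + (\<Sum>j=1..m-1. ?b (2*j) * ?b (2*(m-j)))"
    using m bern_coeff_0 by (simp add: diff_mult_distrib2)
  show ?thesis
  proof (cases "m = 1")
    case True
    thus ?thesis using rec split even bern_coeff_0 bern_coeff_1 by (simp add: algebra_simps)
  next
    case False
    have last: "?b (2*m - 1) = 0" using False m by (intro bern_coeff_odd) auto
    have "?b (2*j+1) * ?b (2*m - (2*j+1)) = 0" for j
      using last by (cases "j = 0") (auto simp: bern_coeff_odd)
    hence "(\<Sum>j<m. ?b (2*j+1) * ?b (2*m - (2*j+1))) = 0" by (intro sum.neutral) blast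
    with last show ?thesis using rec split even False by (simp add: algebra_simps)
  qed
qed

(* c_m = |B_{2m}|/(2m)!, the coefficient of x^{2m} in 1 - (x/2) cot(x/2). *)
definition cot_coeff :: "nat \<Rightarrow> real" where
  "cot_coeff m = (-1) ^ (m+1) * bern_coeff (2*m)"

lemma cot_coeff_rec:
  assumes m: "m \<ge> 1"
  shows "real (2*m+1) * cot_coeff m
           = (if m = 1 then 1/4 else 0) + (\<Sum>j=1..m-1. cot_coeff j * cot_coeff (m-j))"
proof -
  have sign: "cot_coeff j * cot_coeff (m-j) = (-1) ^ m * (bern_coeff (2*j) * bern_coeff (2*(m-j)))"
    if "j \<in> {1..m-1}" for j
  proof -
    have "(-1::real) ^ (j+1) * (-1) ^ (m-j+1) = (-1) ^ ((j+1) + (m-j+1))"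
      by (rule power_add[symmetric])
    also have "(j+1) + (m-j+1) = m + 2" using that by auto
    finally have "(-1::real) ^ (j+1) * (-1) ^ (m-j+1) = (-1) ^ m" by simp
    thus ?thesis unfolding cot_coeff_def by (metis (no_types, lifting) mult.assoc mult.left_commute)
  qed
  define S where "S = (\<Sum>j=1..m-1. bern_coeff (2*j) * bern_coeff (2*(m-j)))"
  have "real (2*m+1) * cot_coeff m = (-1) ^ (m+1) * (real (2*m+1) * bern_coeff (2*m))"
    by (simp add: cot_coeff_def)
  also have "\<dots> = (if m = 1 then 1/4 else 0) + (-1) ^ m * S"
    using bern_coeff_even_rec[OF m] unfolding S_def[symmetric]
    by (cases "m = 1") (simp_all add: algebra_simps)
  also have "\<dots> = (if m = 1 then 1/4 else 0) + (\<Sum>j=1..m-1. cot_coeff j * cot_coeff (m-j))"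
    by (simp add: S_def sum_distrib_left sign)
  finally show ?thesis .
qed

(* All terms of the recurrence are nonnegative, so positivity follows by induction. *)
lemma cot_coeff_pos: "m \<ge> 1 \<Longrightarrow> cot_coeff m > 0"
proof (induction m rule: less_induct)
  case (less m)
  have "real (2*m+1) * cot_coeff m > 0"
  proof (cases "m = 1")
    case True thus ?thesis using cot_coeff_rec[of 1] by simp
  next
    case False
    hence "m \<ge> 2" using less.prems by simp
    hence "cot_coeff 1 * cot_coeff (m-1) > 0" using less.IH[of 1] less.IH[of "m-1"] by auto
    moreover have "(\<Sum>j=1..m-1. cot_coeff j * cot_coeff (m-j)) \<ge> cot_coeff 1 * cot_coeff (m-1)"
      using \<open>m \<ge> 2\<close>
      by (intro member_le_sum) (auto intro!: mult_nonneg_nonneg less_imp_le[OF less.IH])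
    ultimately show ?thesis using cot_coeff_rec[OF less.prems] False by simp
  qed
  thus ?case by (simp add: zero_less_mult_iff)
qed

lemma abs_bern_coeff_even: "m \<ge> 1 \<Longrightarrow> \<bar>bern_coeff (2*m)\<bar> = cot_coeff m"
proof -
  assume "m \<ge> 1"
  have "\<bar>cot_coeff m\<bar> = \<bar>bern_coeff (2*m)\<bar>" by (simp add: cot_coeff_def abs_mult)
  thus ?thesis using cot_coeff_pos[OF \<open>m \<ge> 1\<close>] by simp
qed

section \<open>Elementary real analysis\<close>

lemma mult_cos_le_sin:
  fixes t :: real
  assumes "0 \<le> t" "t \<le> pi/2"
  shows "t * cos t \<le> sin t"
proof (cases "t = pi/2")
  case False
  hence "t < pi/2" using assms by simp
  hence "cos t > 0" using assms by (intro cos_gt_zero_pi) auto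
  moreover have "t \<le> tan t" using abs_tan_ge[of t] \<open>t < pi/2\<close> assms tan_pos_pi2_le by simp
  ultimately show ?thesis by (simp add: tan_def field_simps)
next
  case True
  show ?thesis unfolding True by simp
qed

lemma one_plus_inverse_power_le_3: "(1 + 1 / real n) ^ n \<le> 3"
proof (cases "n = 0")
  case False
  hence "(1 + 1 / real n) ^ n \<le> exp 1"
    by (intro exp_ge_one_plus_x_over_n_power_n) auto
  thus ?thesis using exp_le by linarith
qed simp

lemma stays_positive:
  fixes D :: "real \<Rightarrow> real"
  assumes ab: "a < b" and cont: "continuous_on {a..b} D" and Da: "D a > 0"
    and der: "\<And>y. a < y \<Longrightarrow> y \<le> b \<Longrightarrow> D y = 0 \<Longrightarrow> \<exists>d>0. (D has_real_derivative d) (at y)"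
  shows "D b > 0"
proof (rule ccontr)
  assume "\<not> D b > 0"
  define S where "S = {a..b} \<inter> D -` {..0}"
  have "closed S" unfolding S_def by (intro continuous_closed_preimage cont) auto
  moreover have "bounded S" unfolding S_def by (intro bounded_Int) auto
  moreover have "b \<in> S" using \<open>\<not> D b > 0\<close> ab unfolding S_def by auto
  ultimately obtain y0 where y0: "y0 \<in> S" and first: "\<And>y. y \<in> S \<Longrightarrow> y0 \<le> y"
    using compact_attains_inf[of S] compact_eq_bounded_closed by blast
  have y0ab: "a < y0" "y0 \<le> b" "D y0 \<le> 0" using y0 Da unfolding S_def by (auto simp: less_le)
  have Dy0: "D y0 = 0"
  proof (rule ccontr)
    assume "D y0 \<noteq> 0"
    hence "D y0 < 0" using y0ab by simp
    have "continuous_on {a..y0} D" using y0ab by (intro continuous_on_subset[OF cont]) auto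
    with IVT2'[of D y0 0 a] obtain z where z: "a \<le> z" "z \<le> y0" "D z = 0"
      using \<open>D y0 < 0\<close> Da y0ab by auto
    hence "y0 \<le> z" using y0ab by (intro first) (auto simp: S_def)
    thus False using z \<open>D y0 < 0\<close> by simp
  qed
  obtain d where "d > 0" "(D has_real_derivative d) (at y0)" using der[OF y0ab(1,2) Dy0] by blast
  from DERIV_pos_inc_left[OF this(2,1)] obtain e
    where e: "e > 0" "\<And>h. h > 0 \<Longrightarrow> h < e \<Longrightarrow> D (y0 - h) < D y0"
    by blast
  define h where "h = min e (y0 - a) / 2"
  have h: "h > 0" "h < e" "h < y0 - a" using e y0ab unfolding h_def by auto
  have "D (y0 - h) < 0" using e(2)[OF h(1,2)] Dy0 by simp
  hence "y0 \<le> y0 - h" using h y0ab by (intro first) (auto simp: S_def)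
  thus False using h by simp
qed

section \<open>The function  H(x) = 1 - (x/2) cot(x/2)\<close>

definition cot_fun :: "real \<Rightarrow> real" where
  "cot_fun x = 1 - x * cos (x/2) / (2 * sin (x/2))"

definition cot_fun_deriv :: "real \<Rightarrow> real" where
  "cot_fun_deriv x = (x - 2 * sin (x/2) * cos (x/2)) / (4 * sin (x/2) ^ 2)"

lemma cot_fun_has_deriv:
  assumes "sin (x/2) \<noteq> 0"
  shows "(cot_fun has_real_derivative cot_fun_deriv x) (at x)"
proof -
  define sn cs where "sn = sin (x/2)" and "cs = cos (x/2)"
  have pyth: "sn * sn + cs * cs = 1" unfolding sn_def cs_def by (simp flip: power2_eq_square)
  have "((\<lambda>x. 1 - x * cos (x/2) / (2 * sin (x/2))) has_real_derivative
     (- (((1 * cs + x * (- sn * (1/2))) * (2 * sn) - x * cs * (2 * (cs * (1/2)))) / (2 * sn)^2))) (at x)"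
    using assms unfolding sn_def cs_def
    by (auto intro!: derivative_eq_intros simp: power2_eq_square)
  moreover have "x * (8 * (cs * (cs * (sn * sn)))) + x * (8 * (sn * (sn * (sn * sn))))
                   = x * (8 * (sn * sn))"
    using pyth by algebra
  hence "- (((1 * cs + x * (- sn * (1/2))) * (2 * sn) - x * cs * (2 * (cs * (1/2)))) / (2 * sn)^2)
           = cot_fun_deriv x"
    using assms unfolding cot_fun_deriv_def sn_def[symmetric] cs_def[symmetric]
    by (simp add: field_simps power2_eq_square)
  ultimately show ?thesis unfolding cot_fun_def[abs_def] by simp
qed

lemma cot_fun_riccati:
  assumes "sin (x/2) \<noteq> 0"
  shows "x * cot_fun_deriv x = cot_fun x ^ 2 - cot_fun x + x^2/4"
proof -
  define sn cs where "sn = sin (x/2)" and "cs = cos (x/2)"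
  have pyth: "sn * sn + cs * cs = 1" unfolding sn_def cs_def by (simp flip: power2_eq_square)
  have "x * (x * (2 * sn)) = x * (x * (2 * (cs * (cs * sn)))) + x * (x * (2 * (sn * (sn * sn))))"
    using pyth by algebra
  thus ?thesis using assms
    unfolding cot_fun_def cot_fun_deriv_def sn_def[symmetric] cs_def[symmetric]
    by (simp add: field_simps power2_eq_square)
qed

lemma cot_fun_nonneg:
  assumes "0 < x" "x \<le> pi"
  shows "cot_fun x \<ge> 0"
proof -
  have "sin (x/2) > 0" using assms by (intro sin_gt_zero) auto
  moreover have "(x/2) * cos (x/2) \<le> sin (x/2)" using assms by (intro mult_cos_le_sin) auto
  ultimately show ?thesis unfolding cot_fun_def by (simp add: field_simps)
qed

lemma cot_fun_less_half:
  assumes "0 < x" "x \<le> 2"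
  shows "cot_fun x < 1/2"
proof -
  have s: "sin (x/2) > 0" using assms pi_gt3 by (intro sin_gt_zero) auto
  have "sin (x/2) \<le> x/2" using assms by (intro sin_x_le_x) auto
  moreover have "cos (x/2) > cos (pi/3)" using assms pi_gt3 by (intro cos_monotone_0_pi) auto
  hence c: "cos (x/2) > 1/2" by (simp add: cos_60)
  ultimately have "cos (x/2) * (2 * sin (x/2)) \<le> cos (x/2) * x" by (intro mult_left_mono) auto
  hence "x * cos (x/2) / (2 * sin (x/2)) \<ge> cos (x/2)" using s by (simp add: field_simps)
  thus ?thesis unfolding cot_fun_def using c by linarith
qed

(* Near the pole at 2 pi:  H(2 pi (1 - e)) = 1 + (1-e) (pi e) cot(pi e) / e \<le> 1/e. *)
lemma cot_fun_near_2pi: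
  assumes "0 < e" "e \<le> 1/2"
  shows "cot_fun (2*pi*(1-e)) \<le> 1/e"
proof -
  have s: "sin (pi*e) > 0" using assms by (intro sin_gt_zero) auto
  have "(pi*e) * cos (pi*e) \<le> sin (pi*e)" using assms by (intro mult_cos_le_sin) auto
  hence tc: "(pi*e) * cos (pi*e) / sin (pi*e) \<le> 1" using s by simp
  have half: "2*pi*(1-e)/2 = pi - pi*e" by (simp add: field_simps)
  have "cot_fun (2*pi*(1-e)) = 1 + 2*pi*(1-e) * cos (pi*e) / (2 * sin (pi*e))"
    unfolding cot_fun_def half by (simp add: cos_diff sin_diff)
  also have "\<dots> = 1 + (1-e) * ((pi*e) * cos (pi*e) / sin (pi*e)) / e"
    using assms s by (simp add: field_simps)
  also have "\<dots> \<le> 1 + (1-e) * 1 / e"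
    using assms tc by (intro add_left_mono divide_right_mono mult_left_mono) auto
  also have "\<dots> = 1/e" using assms by (simp add: field_simps)
  finally show ?thesis .
qed

section \<open>Partial sums of the series of H\<close>

definition cot_partial :: "nat \<Rightarrow> real \<Rightarrow> real" where
  "cot_partial M x = (\<Sum>m=1..M. cot_coeff m * x ^ (2*m))"

definition cot_partial_deriv :: "nat \<Rightarrow> real \<Rightarrow> real" where
  "cot_partial_deriv M x = (\<Sum>m=1..M. cot_coeff m * (real (2*m) * x ^ (2*m-1)))"

lemma cot_partial_has_deriv: "(cot_partial M has_real_derivative cot_partial_deriv M x) (at x)"
  unfolding cot_partial_def[abs_def] cot_partial_deriv_def
  by (intro DERIV_sum DERIV_cmult) (auto intro!: derivative_eq_intros)

lemma cot_partial_le_linear: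
  assumes "0 \<le> y" "y \<le> 1"
  shows "cot_partial M y \<le> (\<Sum>m=1..M. cot_coeff m) * y"
proof -
  have "cot_partial M y \<le> (\<Sum>m=1..M. cot_coeff m * y)"
    unfolding cot_partial_def
  proof (intro sum_mono mult_left_mono)
    fix m assume m: "m \<in> {1..M}"
    have "y ^ (2*m) \<le> y ^ 1" using assms m by (intro power_decreasing) auto
    thus "y ^ (2*m) \<le> y" by simp
    show "0 \<le> cot_coeff m" using cot_coeff_pos m by (simp add: less_imp_le)
  qed
  thus ?thesis by (simp add: sum_distrib_right)
qed

lemma truncated_square_le:
  fixes u :: "nat \<Rightarrow> real"
  assumes u: "\<And>j. j \<ge> 1 \<Longrightarrow> u j \<ge> 0"
  shows "(\<Sum>m=1..M. \<Sum>j=1..m-1. u j * u (m-j)) \<le> (\<Sum>j=1..M-1. u j)^2"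
proof -
  define A where "A = {(j,l). 1 \<le> j \<and> 1 \<le> l \<and> j + l \<le> M}"
  have "(\<Sum>m=1..M. \<Sum>j=1..m-1. u j * u (m-j))
          = (\<Sum>(m,j)\<in>Sigma {1..M} (\<lambda>m. {1..m-1}). u j * u (m-j))"
    by (rule sum.Sigma) auto
  also have "\<dots> = (\<Sum>(j,l)\<in>A. u j * u l)"
    by (rule sum.reindex_bij_witness[where i="\<lambda>(j,l). (j+l, j)" and j="\<lambda>(m,j). (j, m-j)"])
       (auto simp: A_def)
  also have "\<dots> \<le> (\<Sum>(j,l)\<in>{1..M-1}\<times>{1..M-1}. u j * u l)"
    by (rule sum_mono2) (auto simp: A_def intro!: mult_nonneg_nonneg u)
  also have "\<dots> = (\<Sum>j=1..M-1. u j)^2"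
    by (simp add: power2_eq_square sum_product sum.cartesian_product)
  finally show ?thesis .
qed

lemma cot_partial_euler:
  assumes M: "M \<ge> 1"
  shows "x * cot_partial_deriv M x + cot_partial M x
           = x^2/4 + (\<Sum>m=1..M. \<Sum>j=1..m-1. (cot_coeff j * x^(2*j)) * (cot_coeff (m-j) * x^(2*(m-j))))"
proof -
  have termwise: "x * (cot_coeff m * (real (2*m) * x ^ (2*m-1))) + cot_coeff m * x ^ (2*m)
      = (if m = 1 then x^2/4 else 0)
        + (\<Sum>j=1..m-1. (cot_coeff j * x^(2*j)) * (cot_coeff (m-j) * x^(2*(m-j))))"
    if m: "m \<ge> 1" for m
  proof -
    have "Suc (2*m-1) = 2*m" using m by simp
    hence "x * x ^ (2*m-1) = x ^ (2*m)" by (metis power_Suc)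
    hence "x * (cot_coeff m * (real (2*m) * x ^ (2*m-1))) + cot_coeff m * x ^ (2*m)
             = (real (2*m+1) * cot_coeff m) * x ^ (2*m)"
      by (simp add: algebra_simps)
    also have "\<dots> = (if m = 1 then 1/4 else 0) * x ^ (2*m)
                     + (\<Sum>j=1..m-1. cot_coeff j * cot_coeff (m-j) * x ^ (2*m))"
      unfolding cot_coeff_rec[OF m] by (simp add: distrib_right sum_distrib_right)
    also have "(\<Sum>j=1..m-1. cot_coeff j * cot_coeff (m-j) * x ^ (2*m))
        = (\<Sum>j=1..m-1. (cot_coeff j * x^(2*j)) * (cot_coeff (m-j) * x^(2*(m-j))))"
    proof (intro sum.cong refl)
      fix j assume "j \<in> {1..m-1}"
      hence "2*m = 2*j + 2*(m-j)" by auto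
      hence "x ^ (2*m) = x ^ (2*j) * x ^ (2*(m-j))" by (metis power_add)
      thus "cot_coeff j * cot_coeff (m-j) * x ^ (2*m)
              = (cot_coeff j * x^(2*j)) * (cot_coeff (m-j) * x^(2*(m-j)))" by simp
    qed
    finally show ?thesis by simp
  qed
  have "x * cot_partial_deriv M x + cot_partial M x
      = (\<Sum>m=1..M. x * (cot_coeff m * (real (2*m) * x ^ (2*m-1))) + cot_coeff m * x ^ (2*m))"
    unfolding cot_partial_deriv_def cot_partial_def by (simp add: sum_distrib_left sum.distrib)
  also have "\<dots> = (\<Sum>m=1..M. (if m = 1 then x^2/4 else 0))
      + (\<Sum>m=1..M. \<Sum>j=1..m-1. (cot_coeff j * x^(2*j)) * (cot_coeff (m-j) * x^(2*(m-j))))"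
    unfolding sum.distrib[symmetric] by (rule sum.cong[OF refl], rule termwise) simp
  also have "(\<Sum>m=1..M. (if m = 1 then x^2/4 else 0)) = x^2/4"
    using M by (subst sum.delta) auto
  finally show ?thesis .
qed

lemma cot_partial_riccati:
  assumes M: "M \<ge> 1" and x: "x > 0"
  shows "x * cot_partial_deriv M x + cot_partial M x < x^2/4 + cot_partial M x ^ 2"
proof -
  define u where "u j = cot_coeff j * x ^ (2*j)" for j
  have u_nonneg: "u j \<ge> 0" if "j \<ge> 1" for j using cot_coeff_pos[OF that] x unfolding u_def by simp
  have "cot_partial M x = (\<Sum>j=1..M-1. u j) + u M"
  proof -
    have "{1..M} = insert M {1..M-1}" "M \<notin> {1..M-1}" using M by auto
    thus ?thesis unfolding cot_partial_def u_def by (simp add: add.commute)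
  qed
  moreover have "u M > 0" using cot_coeff_pos[OF M] x unfolding u_def by simp
  moreover have "(\<Sum>j=1..M-1. u j) \<ge> 0" by (intro sum_nonneg) (auto intro: u_nonneg)
  ultimately have "(\<Sum>j=1..M-1. u j) ^ 2 < cot_partial M x ^ 2" by (simp add: power_strict_mono)
  moreover have "(\<Sum>m=1..M. \<Sum>j=1..m-1. u j * u (m-j)) \<le> (\<Sum>j=1..M-1. u j) ^ 2"
    by (rule truncated_square_le) (rule u_nonneg)
  ultimately show ?thesis using cot_partial_euler[OF M, of x] unfolding u_def by simp
qed

section \<open>Comparison of the partial sums with H\<close>

definition cot_gap :: "nat \<Rightarrow> real \<Rightarrow> real" where
  "cot_gap M y = cot_fun y - cot_partial M y"

lemma cot_gap_has_deriv:
  assumes "0 < y" "y < 2*pi"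
  shows "(cot_gap M has_real_derivative (cot_fun_deriv y - cot_partial_deriv M y)) (at y)"
proof -
  have "sin (y/2) > 0" using assms by (intro sin_gt_zero) auto
  thus ?thesis unfolding cot_gap_def[abs_def]
    using cot_fun_has_deriv cot_partial_has_deriv by (intro DERIV_diff) auto
qed

(* Subtracting the Riccati inequality of P from the Riccati equation of H gives a linear
   differential inequality for the gap D = H - P:  y D' > D (H + P - 1). *)
lemma cot_gap_riccati:
  assumes M: "M \<ge> 1" and y: "0 < y" "y < 2*pi"
  shows "y * (cot_fun_deriv y - cot_partial_deriv M y)
           > cot_gap M y * (cot_fun y + cot_partial M y - 1)"
proof -
  have "sin (y/2) > 0" using y by (intro sin_gt_zero) auto
  hence "y * cot_fun_deriv y = cot_fun y ^ 2 - cot_fun y + y^2/4" by (intro cot_fun_riccati) simp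
  with cot_partial_riccati[OF M y(1)] show ?thesis
    unfolding cot_gap_def by (simp add: algebra_simps power2_eq_square)
qed

(* Close to 0 we have H + P < 1, so wherever the gap is nonpositive it is increasing. *)
lemma cot_gap_deriv_pos_near_0:
  assumes M: "M \<ge> 1" and y: "0 < y" "y \<le> 1" "(\<Sum>m=1..M. cot_coeff m) * y < 1/2"
    and gap: "cot_gap M y \<le> 0"
  shows "cot_fun_deriv y - cot_partial_deriv M y > 0"
proof -
  have "cot_fun y < 1/2" using y by (intro cot_fun_less_half) auto
  moreover have "cot_partial M y \<le> (\<Sum>m=1..M. cot_coeff m) * y"
    using y by (intro cot_partial_le_linear) auto
  ultimately have "cot_gap M y * (cot_fun y + cot_partial M y - 1) \<ge> 0"
    using y gap by (intro mult_nonpos_nonpos) auto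
  moreover have "y < 2*pi" using y pi_gt3 by linarith
  ultimately have "y * (cot_fun_deriv y - cot_partial_deriv M y) > 0"
    using cot_gap_riccati[OF M y(1)] by linarith
  thus ?thesis using y by (simp add: zero_less_mult_iff)
qed

(* Otherwise it would be strictly increasing on
   a small interval (0, y1], hence negative there, whereas H \<ge> 0 and P_M(z) \<le> K z force
   gap(z) \<ge> -K z, which exceeds any fixed negative value as z \<rightarrow> 0. *)
lemma cot_gap_pos_near_0:
  assumes M: "M \<ge> 1"
  shows "\<exists>a. 0 < a \<and> a < 1 \<and> cot_gap M a > 0"
proof (rule ccontr)
  assume none: "\<not> (\<exists>a. 0 < a \<and> a < 1 \<and> cot_gap M a > 0)"
  define K where "K = (\<Sum>m=1..M. cot_coeff m)"
  have K: "K \<ge> 0" unfolding K_def by (intro sum_nonneg) (auto intro: less_imp_le[OF cot_coeff_pos])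
  define y1 where "y1 = min 1 (1 / (2*K + 2)) / 2"
  have y1: "0 < y1" "y1 < 1" "K * y1 < 1/2" using K unfolding y1_def by (auto simp: field_simps min_def)
  have gap_nonpos: "cot_gap M y \<le> 0" if "0 < y" "y \<le> y1" for y
    using none that y1 by (meson le_less_trans not_less)
  have incr: "cot_gap M z < cot_gap M w" if "0 < z" "z < w" "w \<le> y1" for z w
  proof (rule DERIV_pos_imp_increasing[OF that(2)])
    fix t assume t: "z \<le> t" "t \<le> w"
    have "0 < t" "t \<le> 1" "K * t < 1/2" "t < 2*pi"
      using t that y1 K pi_gt3 mult_left_mono[of t y1 K] by auto
    thus "\<exists>d. (cot_gap M has_real_derivative d) (at t) \<and> 0 < d"
      using cot_gap_has_deriv cot_gap_deriv_pos_near_0[OF M] gap_nonpos[of t] t that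
      unfolding K_def by (meson order_trans)
  qed
  define w where "w = y1/2"
  have w: "0 < w" "w < y1" using y1 unfolding w_def by auto
  have "cot_gap M w < 0" using incr[OF w order_refl] gap_nonpos[OF y1(1) order_refl] by simp
  define z where "z = min (w/2) (- cot_gap M w / (K+1))"
  have z: "0 < z" "z < w" "K * z < - cot_gap M w"
  proof -
    show "0 < z" "z < w" using w \<open>cot_gap M w < 0\<close> K unfolding z_def
      by (auto simp: divide_neg_pos)
    have "K * z \<le> K * (- cot_gap M w / (K+1))" unfolding z_def using K by (intro mult_left_mono) auto
    also have "\<dots> < - cot_gap M w" using \<open>cot_gap M w < 0\<close> K by (simp add: field_simps)
    finally show "K * z < - cot_gap M w" .
  qed
  have "cot_partial M z \<le> K * z" unfolding K_def using z w y1 by (intro cot_partial_le_linear) auto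
  moreover have "cot_fun z \<ge> 0" using z w y1 pi_gt3 by (intro cot_fun_nonneg) auto
  ultimately have "cot_gap M z > cot_gap M w" using z unfolding cot_gap_def by simp
  moreover have "cot_gap M z < cot_gap M w" using incr[OF z(1,2)] w by simp
  ultimately show False by simp
qed

(* Main comparison: on [1, 2 pi) every partial sum stays strictly below H.  The gap is
   positive at some a < 1, and by the Riccati inequality it has positive derivative at
   each of its zeros, so it cannot become nonpositive. *)
lemma cot_partial_less_cot_fun:
  assumes M: "M \<ge> 1" and x: "1 \<le> x" "x < 2*pi"
  shows "cot_partial M x < cot_fun x"
proof -
  obtain a where a: "0 < a" "a < 1" "cot_gap M a > 0" using cot_gap_pos_near_0[OF M] by blast
  have "cot_gap M x > 0"
  proof (rule stays_positive[of a x])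
    show "a < x" using a x by simp
    have "isCont (cot_gap M) y" if "y \<in> {a..x}" for y
      using that a x cot_gap_has_deriv[of y M] by (auto intro: DERIV_isCont)
    thus "continuous_on {a..x} (cot_gap M)" by (intro continuous_at_imp_continuous_on) auto
    show "cot_gap M a > 0" by (rule a)
  next
    fix y assume y: "a < y" "y \<le> x" "cot_gap M y = 0"
    hence y': "0 < y" "y < 2*pi" using a x by auto
    have "y * (cot_fun_deriv y - cot_partial_deriv M y) > 0"
      using cot_gap_riccati[OF M y'] y(3) by simp
    hence "cot_fun_deriv y - cot_partial_deriv M y > 0" using y' by (simp add: zero_less_mult_iff)
    thus "\<exists>d>0. (cot_gap M has_real_derivative d) (at y)" using cot_gap_has_deriv[OF y'] by blast
  qed
  thus ?thesis unfolding cot_gap_def by simp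
qed

section \<open>Bounds for the Bernoulli and Genocchi numbers\<close>

(* Evaluating the comparison at x = 2 pi (1 - e) with e = 1/(2M+1):
   c_M x^{2M} \<le> P_M(x) < H(x) \<le> 2M+1, and (2 pi / x)^{2M} = (1 + 1/(2M))^{2M} \<le> 3. *)
lemma cot_coeff_bound:
  assumes M: "M \<ge> 1"
  shows "cot_coeff M \<le> 3 * real (2*M+1) / (2*pi) ^ (2*M)"
proof -
  define e where "e = 1 / real (2*M+1)"
  have e: "0 < e" "e \<le> 1/3" using M unfolding e_def by (auto simp: field_simps)
  define x where "x = 2*pi*(1-e)"
  have "0 < pi * e" "pi * e \<le> pi * (1/3)" using e by (auto intro: mult_left_mono)
  moreover have "x = 2*pi - 2*(pi*e)" by (simp add: x_def algebra_simps)
  ultimately have x: "1 \<le> x" "x < 2*pi" using pi_gt3 by linarith+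
  have "cot_coeff M * x ^ (2*M) \<le> cot_partial M x"
    unfolding cot_partial_def using M x
    by (intro member_le_sum) (auto intro!: mult_nonneg_nonneg less_imp_le[OF cot_coeff_pos])
  also have "\<dots> < cot_fun x" using cot_partial_less_cot_fun[OF M x] .
  also have "\<dots> \<le> 1/e" unfolding x_def using e by (intro cot_fun_near_2pi) auto
  also have "\<dots> = real (2*M+1)" unfolding e_def by simp
  finally have below: "cot_coeff M * x ^ (2*M) < real (2*M+1)" .
  have "x = 2*pi / (1 + 1 / real (2*M))"
    unfolding x_def e_def using M by (simp add: field_simps)
  moreover have "1 + 1 / real (2*M) > 0" by (simp add: add_pos_nonneg)
  ultimately have "(2*pi) ^ (2*M) = x ^ (2*M) * (1 + 1 / real (2*M)) ^ (2*M)"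
    by (simp add: power_divide)
  also have "\<dots> \<le> x ^ (2*M) * 3"
    using one_plus_inverse_power_le_3[of "2*M"] x by (intro mult_left_mono) auto
  finally have "cot_coeff M * (2*pi) ^ (2*M) \<le> cot_coeff M * (3 * x ^ (2*M))"
    using cot_coeff_pos[OF M] by (intro mult_left_mono) auto
  also have "\<dots> \<le> 3 * real (2*M+1)" using below by simp
  finally show ?thesis by (simp add: field_simps)
qed

(* |G_k| = 2 (4^M - 1) (2M)! c_M for k = 2M, |G_1| = 1, and G_k = 0 for other odd k. *)
lemma genocchi_bound:
  assumes k: "k \<ge> 1"
  shows "\<bar>genocchi k\<bar> \<le> 6 * fact (k+1) / pi ^ k"
proof (cases "even k")
  case True
  then obtain M where kM: "k = 2*M" by blast
  hence M: "M \<ge> 1" using k by simp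
  have "\<bar>1 - (2::real) ^ (2*M)\<bar> = 4 ^ M - 1" by (simp add: power_mult)
  hence "\<bar>genocchi k\<bar> = 2 * (4 ^ M - 1) * fact (2*M) * cot_coeff M"
    unfolding genocchi_def bernoulli_eq_coeff kM abs_mult abs_bern_coeff_even[OF M] by simp
  also have "\<dots> \<le> 2 * 4 ^ M * fact (2*M) * (3 * real (2*M+1) / (2*pi) ^ (2*M))"
    using cot_coeff_bound[OF M] cot_coeff_pos[OF M] by (intro mult_mono) auto
  also have "\<dots> = 6 * fact (k+1) / pi ^ k"
  proof -
    have "(2*pi) ^ (2*M) = 4 ^ M * pi ^ (2*M)" by (simp add: power_mult_distrib power_mult)
    thus ?thesis unfolding kM by (simp add: field_simps)
  qed
  finally show ?thesis .
next
  case False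
  show ?thesis
  proof (cases "k = 1")
    case True
    have "genocchi 1 = 1" unfolding genocchi_def bernoulli_eq_coeff using bern_coeff_1 by simp
    moreover have "6 * fact 2 / pi \<ge> 1" using pi_less_4 by (simp add: field_simps)
    ultimately show ?thesis using True by simp
  next
    case False
    hence "genocchi k = 0"
      unfolding genocchi_def bernoulli_eq_coeff using bern_coeff_odd \<open>odd k\<close> by simp
    thus ?thesis by simp
  qed
qed

section \<open>A weighted sum of binomial coefficients\<close>

lemma choose_mult_fact_eq_prod: "real (n choose k) * fact k = (\<Prod>i<k. real n - real i)"
proof -
  have "real (n choose k) * fact k = (real n gchoose k) * fact k" by (simp add: binomial_gbinomial)
  also have "\<dots> = (\<Prod>i=0..<k. real n - real i)" by (rule gbinomial_mult_fact')
  finally show ?thesis by (simp add: atLeast0LessThan)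
qed

(* C(n,k) k! = n (n-1) ... (n-k+1); all but the first five factors are bounded by n. *)
lemma choose_mult_fact_le:
  assumes "5 \<le> k" "k \<le> n"
  shows "real (n choose k) * fact k \<le> (\<Prod>i<5. real n - real i) * real n ^ (k - 5)"
proof -
  have "{..<k} = {..<5} \<union> {5..<k}" using assms by auto
  hence "(\<Prod>i<k. real n - real i) = (\<Prod>i<5. real n - real i) * (\<Prod>i\<in>{5..<k}. real n - real i)"
    by (simp add: prod.union_disjoint ivl_disj_int)
  also have "\<dots> \<le> (\<Prod>i<5. real n - real i) * real n ^ (k - 5)"
  proof (rule mult_left_mono)
    have "(\<Prod>i\<in>{5..<k}. real n - real i) \<le> (\<Prod>i\<in>{5..<k}. real n)"
      using assms by (intro prod_mono) auto
    thus "(\<Prod>i\<in>{5..<k}. real n - real i) \<le> real n ^ (k - 5)" by simp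
    show "0 \<le> (\<Prod>i<5. real n - real i)" using assms by (intro prod_nonneg) auto
  qed
  finally show ?thesis by (simp add: choose_mult_fact_eq_prod)
qed

definition binom_fact_sum :: "nat \<Rightarrow> nat \<Rightarrow> real" where
  "binom_fact_sum n s = (\<Sum>k<s. real (n choose (k+1)) * fact (k+2) * pi ^ (s-k))"

lemma binom_fact_sum_Suc:
  "binom_fact_sum n (Suc s) = pi * binom_fact_sum n s + real (n choose (s+1)) * fact (s+2) * pi"
proof -
  have "pi ^ (Suc s - k) = pi * pi ^ (s - k)" if "k < s" for k
    using that by (simp add: Suc_diff_le)
  thus ?thesis unfolding binom_fact_sum_def by (simp add: sum_distrib_left mult_ac)
qed

(* Base case s = 4: after replacing pi by 16/5 this is a polynomial inequality in n,
   visibly true in the variable t = n - 4 \<ge> 0. *)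
lemma binom_fact_sum_4:
  assumes n: "n \<ge> 4"
  shows "binom_fact_sum n 4 \<le> 9/2 * real n ^ 5"
proof -
  define N where "N = real n"
  have f2: "real (n choose 2) * 2 = N * (N - 1)"
    using choose_mult_fact_eq_prod[of n 2] by (simp add: N_def numeral_eq_Suc lessThan_Suc)
  have f3: "real (n choose 3) * 6 = N * (N - 1) * (N - 2)"
    using choose_mult_fact_eq_prod[of n 3] by (simp add: N_def numeral_eq_Suc lessThan_Suc algebra_simps)
  have f4: "real (n choose 4) * 24 = N * (N - 1) * (N - 2) * (N - 3)"
    using choose_mult_fact_eq_prod[of n 4] by (simp add: N_def numeral_eq_Suc lessThan_Suc algebra_simps)
  have "binom_fact_sum n 4 = real (n choose 1) * 2 * pi^4 + (real (n choose 2) * 2) * 3 * pi^3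
      + (real (n choose 3) * 6) * 4 * pi^2 + (real (n choose 4) * 24) * 5 * pi"
    unfolding binom_fact_sum_def by (simp add: numeral_eq_Suc lessThan_Suc algebra_simps)
  also have "\<dots> = 2 * N * pi^4 + 3 * (N * (N - 1)) * pi^3
      + 4 * (N * (N - 1) * (N - 2)) * pi^2 + 5 * (N * (N - 1) * (N - 2) * (N - 3)) * pi"
    unfolding f2 f3 f4 by (simp add: N_def)
  also have "\<dots> \<le> 2 * N * (16/5)^4 + 3 * (N * (N - 1)) * (16/5)^3
      + 4 * (N * (N - 1) * (N - 2)) * (16/5)^2 + 5 * (N * (N - 1) * (N - 2) * (N - 3)) * (16/5)"
    using n pi_approx(2) pi_gt_zero
    by (intro add_mono mult_left_mono power_mono) (auto simp: N_def)
  also have "\<dots> \<le> 9/2 * N ^ 5"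
  proof -
    define t where "t = N - 4"
    have "t \<ge> 0" using n unfolding t_def N_def by simp
    have "9/2 * N ^ 5 - (2 * N * (16/5)^4 + 3 * (N * (N - 1)) * (16/5)^3
      + 4 * (N * (N - 1) * (N - 2)) * (16/5)^2 + 5 * (N * (N - 1) * (N - 2) * (N - 3)) * (16/5))
        = N * (191008/625 + 84112/125 * t + 7376/25 * t^2 + 56 * t^3 + 9/2 * t^4)"
      unfolding t_def by (simp add: eval_nat_numeral) algebra
    also have "\<dots> \<ge> 0" using \<open>t \<ge> 0\<close> by (simp add: N_def)
    finally show ?thesis by simp
  qed
  finally show ?thesis unfolding N_def .
qed

(* The polynomial estimate behind the inductive step, for t = s + 2 \<le> n + 1. *)
lemma quintic_bound:
  fixes N t :: real
  assumes N: "N \<ge> 5" and t: "0 \<le> t" "t \<le> N + 1"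
  shows "pi * t * (N * (N - 1) * (N - 2) * (N - 3) * (N - 4)) \<le> 9/2 * (N - pi) * N ^ 5"
proof -
  have A: "pi * t * (N - 1) \<le> 9/2 * N^2"
  proof -
    have "pi * t * (N - 1) \<le> 9/2 * (N + 1) * (N - 1)"
      using N t pi_less_4 pi_gt_zero by (intro mult_right_mono mult_mono) auto
    also have "\<dots> \<le> 9/2 * N^2" by (simp add: algebra_simps power2_eq_square)
    finally show ?thesis .
  qed
  have B: "(N - 2) * (N - 3) \<le> N * (N - pi)"
  proof -
    have "pi * N \<le> 16/5 * N" using N pi_approx(2) by (intro mult_right_mono) auto
    hence "pi * N \<le> 5 * N - 6" using N by linarith
    thus ?thesis by (simp add: algebra_simps)
  qed
  have C: "(N - 4) * N \<le> N * N" using N by simp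
  have "N - pi \<ge> 0" using N pi_less_4 by simp
  have AB: "pi * t * (N - 1) * ((N - 2) * (N - 3)) \<le> 9/2 * N^2 * (N * (N - pi))"
    by (rule mult_mono[OF A B]) (use N in auto)
  have "pi * t * (N - 1) * ((N - 2) * (N - 3)) * ((N - 4) * N) \<le> 9/2 * N^2 * (N * (N - pi)) * (N * N)"
    by (rule mult_mono[OF AB C]) (use N \<open>N - pi \<ge> 0\<close> in auto)
  thus ?thesis by (simp add: algebra_simps eval_nat_numeral)
qed

(* Inductive step  T(n,s+1) = pi T(n,s) + C(n,s+1) (s+2)! pi: the new term is at most
   9/2 (n - pi) n^{s+1}, which keeps the bound 9/2 n^{s+2} valid. *)
lemma binom_fact_sum_new_term:
  assumes s: "4 \<le> s" "s + 1 \<le> n"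
  shows "real (n choose (s+1)) * fact (s+2) * pi \<le> 9/2 * (real n - pi) * real n ^ (s+1)"
proof -
  define N where "N = real n"
  define Q where "Q = N * (N - 1) * (N - 2) * (N - 3) * (N - 4)"
  have N: "N \<ge> 5" using s unfolding N_def by simp
  have Q: "(\<Prod>i<5. real n - real i) = Q"
    unfolding Q_def N_def by (simp add: numeral_eq_Suc lessThan_Suc algebra_simps)
  have "real (n choose (s+1)) * fact (s+2) * pi = pi * real (s+2) * (real (n choose (s+1)) * fact (s+1))"
    by (simp add: algebra_simps)
  also have "\<dots> \<le> pi * real (s+2) * (Q * N ^ (s - 4))"
    using choose_mult_fact_le[of "s+1" n] s Q pi_gt_zero unfolding N_def
    by (intro mult_left_mono) auto
  also have "\<dots> = (pi * real (s+2) * Q) * N ^ (s - 4)" by simp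
  also have "\<dots> \<le> (9/2 * (N - pi) * N ^ 5) * N ^ (s - 4)"
    using quintic_bound[OF N, of "real (s+2)"] s N unfolding Q_def N_def
    by (intro mult_right_mono) auto
  also have "\<dots> = 9/2 * (N - pi) * N ^ (s+1)"
    using s by (simp flip: power_add)
  finally show ?thesis unfolding N_def .
qed

lemma binom_fact_sum_bound:
  assumes "4 \<le> s" "s \<le> n"
  shows "binom_fact_sum n s \<le> 9/2 * real n ^ (s+1)"
  using assms
proof (induction s rule: dec_induct)
  case base
  thus ?case using binom_fact_sum_4 by simp
next
  case (step s)
  have "binom_fact_sum n (Suc s) = pi * binom_fact_sum n s + real (n choose (s+1)) * fact (s+2) * pi"
    by (rule binom_fact_sum_Suc)
  also have "\<dots> \<le> pi * (9/2 * real n ^ (s+1)) + 9/2 * (real n - pi) * real n ^ (s+1)"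
    using step binom_fact_sum_new_term[of s n] pi_gt_zero by (intro add_mono mult_left_mono) auto
  also have "\<dots> = 9/2 * real n ^ (Suc s + 1)" by (simp add: field_simps)
  finally show ?case .
qed

lemma F_poly_term_bound:
  assumes k: "k < s" and x: "0 \<le> x" "x \<le> real p"
  shows "\<bar>real (n choose (k+1)) * genocchi (k+1) * real p ^ k * x ^ (s-1-k)\<bar>
           \<le> 6 * real p ^ (s-1) / pi ^ (s+1) * (real (n choose (k+1)) * fact (k+2) * pi ^ (s-k))"
proof -
  have "\<bar>real (n choose (k+1)) * genocchi (k+1) * real p ^ k * x ^ (s-1-k)\<bar>
          = real (n choose (k+1)) * \<bar>genocchi (k+1)\<bar> * real p ^ k * x ^ (s-1-k)"
    using x by (simp add: abs_mult)
  also have "\<dots> \<le> real (n choose (k+1)) * (6 * fact (k+2) / pi ^ (k+1)) * real p ^ k * real p ^ (s-1-k)"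
    using genocchi_bound[of "k+1"] x by (intro mult_mono mult_left_mono power_mono) auto
  also have "\<dots> = 6 * real p ^ (s-1) / pi ^ (s+1) * (real (n choose (k+1)) * fact (k+2) * pi ^ (s-k))"
  proof -
    define C F where "C = real (n choose (k+1))" and "F = (fact (k+2) :: real)"
    have "real p ^ k * real p ^ (s-1-k) = real p ^ (s-1)" using k by (simp flip: power_add)
    moreover have "pi ^ (s+1) = pi ^ (k+1) * pi ^ (s-k)" using k by (simp flip: power_add)
    ultimately show ?thesis
      unfolding C_def[symmetric] F_def[symmetric] using pi_gt_zero by (simp add: field_simps)
  qed
  finally show ?thesis .
qed

lemma F_poly_bound_binom_fact_sum:
  assumes s: "s \<ge> 1" and x: "0 \<le> x" "x \<le> real p"
  shows "\<bar>F_poly n s p x\<bar> \<le> 6 * real p ^ (s-1) / pi ^ (s+1) * binom_fact_sum n s"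
proof -
  have "{0..s-1} = {..<s}" using s by auto
  hence "\<bar>F_poly n s p x\<bar>
           \<le> (\<Sum>k<s. \<bar>real (n choose (k+1)) * genocchi (k+1) * real p ^ k * x ^ (s-1-k)\<bar>)"
    unfolding F_poly_def by (simp only: sum_abs)
  also have "\<dots> \<le> (\<Sum>k<s. 6 * real p ^ (s-1) / pi ^ (s+1)
                           * (real (n choose (k+1)) * fact (k+2) * pi ^ (s-k)))"
    using x by (intro sum_mono F_poly_term_bound) auto
  finally show ?thesis unfolding binom_fact_sum_def by (simp add: sum_distrib_left)
qed

theorem mainTheorem5:
  fixes n s p j :: nat
  assumes "4 \<le> s" and "s \<le> n" and "prime p" and "odd p" and "j < p"
  shows "\<bar>F_poly n s p (real j)\<bar> \<le> 3 * (real n * real p / pi) ^ (s + 1)"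
proof -
  have "p \<ge> 3"
    using prime_ge_2_nat[OF \<open>prime p\<close>] \<open>odd p\<close> by (cases "p = 2") auto
  hence "9 * real p ^ (s-1) \<le> real p ^ 2 * real p ^ (s-1)"
    using power_mono[of 3 "real p" 2] by (intro mult_right_mono) auto
  also have "\<dots> = real p ^ (s+1)" using \<open>4 \<le> s\<close> by (simp flip: power_add)
  finally have p2: "9 * real p ^ (s-1) \<le> real p ^ (s+1)" .
  have "\<bar>F_poly n s p (real j)\<bar> \<le> 6 * real p ^ (s-1) / pi ^ (s+1) * binom_fact_sum n s"
    using assms by (intro F_poly_bound_binom_fact_sum) auto
  also have "\<dots> \<le> 6 * real p ^ (s-1) / pi ^ (s+1) * (9/2 * real n ^ (s+1))"
    using binom_fact_sum_bound[OF assms(1,2)] by (intro mult_left_mono) auto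
  also have "\<dots> = 3 * (9 * real p ^ (s-1)) * real n ^ (s+1) / pi ^ (s+1)" by simp
  also have "\<dots> \<le> 3 * real p ^ (s+1) * real n ^ (s+1) / pi ^ (s+1)"
    using p2 by (intro divide_right_mono mult_right_mono mult_left_mono) auto
  also have "\<dots> = 3 * (real n * real p / pi) ^ (s + 1)"
    by (simp add: power_mult_distrib power_divide)
  finally show ?thesis .
qed

end
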